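(* A graph $G$ is an iso-unique Grundy domination graph if and only if each connected component of $G$ is a complete graph.
   Context: For a graph $G$, $N(v)$ is the open neighborhood and $N[v]=N(v)\cup\{v\}$ the closed neighborhood of $v$. A sequence $(v_1,\ldots,v_k)$ of distinct vertices is a closed neighborhood sequence if $N[v_i]\setminus\bigcup_{j=1}^{i-1}N[v_j]\neq\emptyset$ for each $i\in[k]$. The Grundy domination number $\gamma_{gr}(G)$ is the maximum length of a closed neighborhood sequence; the set of vertices of a closed neighborhood sequence of length $\gamma_{gr}(G)$ is a Grundy dominating set. $G$ is an iso-unique Grundy domination graph if for every two Grundy dominating sets $A,B$ of $G$ there is an automorphism $\phi$ of $G$ with $\phi(A)=B$. *)

theory Defs
  imports Main
begin

definition graph :: "'a set \<Rightarrow> ('a \<Rightarrow> 'a \<Rightarrow> bool) \<Rightarrow> bool" where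
  "graph V E \<longleftrightarrow> finite V \<and> (\<forall>u v. E u v \<longrightarrow> u \<in> V \<and> v \<in> V)
     \<and> (\<forall>u v. E u v \<longrightarrow> E v u) \<and> (\<forall>v. \<not> E v v)"

definition open_nbhd :: "'a set \<Rightarrow> ('a \<Rightarrow> 'a \<Rightarrow> bool) \<Rightarrow> 'a \<Rightarrow> 'a set" where
  "open_nbhd V E v = {u \<in> V. E v u}"

definition closed_nbhd :: "'a set \<Rightarrow> ('a \<Rightarrow> 'a \<Rightarrow> bool) \<Rightarrow> 'a \<Rightarrow> 'a set" where
  "closed_nbhd V E v = insert v (open_nbhd V E v)"

definition cn_seq :: "'a set \<Rightarrow> ('a \<Rightarrow> 'a \<Rightarrow> bool) \<Rightarrow> 'a list \<Rightarrow> bool" where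
  "cn_seq V E xs \<longleftrightarrow> distinct xs \<and> set xs \<subseteq> V \<and>
     (\<forall>i < length xs. closed_nbhd V E (xs ! i) - (\<Union>j<i. closed_nbhd V E (xs ! j)) \<noteq> {})"

definition grundy_dom_number :: "'a set \<Rightarrow> ('a \<Rightarrow> 'a \<Rightarrow> bool) \<Rightarrow> nat" where
  "grundy_dom_number V E = Max (length ` {xs. cn_seq V E xs})"

definition grundy_dominating_set :: "'a set \<Rightarrow> ('a \<Rightarrow> 'a \<Rightarrow> bool) \<Rightarrow> 'a set \<Rightarrow> bool" where
  "grundy_dominating_set V E A \<longleftrightarrow>
     (\<exists>xs. cn_seq V E xs \<and> length xs = grundy_dom_number V E \<and> set xs = A)"

definition automorphism :: "'a set \<Rightarrow> ('a \<Rightarrow> 'a \<Rightarrow> bool) \<Rightarrow> ('a \<Rightarrow> 'a) \<Rightarrow> bool" where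
  "automorphism V E \<phi> \<longleftrightarrow> bij_betw \<phi> V V \<and>
     (\<forall>u\<in>V. \<forall>v\<in>V. E u v \<longleftrightarrow> E (\<phi> u) (\<phi> v))"

definition iso_unique_grundy :: "'a set \<Rightarrow> ('a \<Rightarrow> 'a \<Rightarrow> bool) \<Rightarrow> bool" where
  "iso_unique_grundy V E \<longleftrightarrow>
     (\<forall>A B. grundy_dominating_set V E A \<and> grundy_dominating_set V E B \<longrightarrow>
        (\<exists>\<phi>. automorphism V E \<phi> \<and> \<phi> ` A = B))"

definition connected_component :: "'a set \<Rightarrow> ('a \<Rightarrow> 'a \<Rightarrow> bool) \<Rightarrow> 'a set \<Rightarrow> bool" where
  "connected_component V E C \<longleftrightarrow> (\<exists>u\<in>V. C = {v \<in> V. E\<^sup>*\<^sup>* u v})"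

definition is_complete :: "('a \<Rightarrow> 'a \<Rightarrow> bool) \<Rightarrow> 'a set \<Rightarrow> bool" where
  "is_complete E C \<longleftrightarrow> (\<forall>u\<in>C. \<forall>v\<in>C. u \<noteq> v \<longrightarrow> E u v)"

end

theory Submission
  imports Defs
begin

text \<open>If every component is a clique, the closed neighbourhoods are exactly the components.
  A closed neighbourhood sequence never contains two vertices with the same closed neighbourhood,
  and one of maximum length dominates V; so the Grundy dominating sets are exactly the sets meeting
  each component once, and swapping representatives inside every component is an automorphism.

  Conversely, take a Grundy sequence whose last vertex lies in the component C of u (vertices of
  other components can be moved to the front) and footprints y \<in> C; let P be its prefix. Any
  vertex w with a neighbour outside N[P] may replace the last vertex, so P + w is again a Grundy
  dominating set. Iso-uniqueness forbids such a w inside N[P], by counting edges, so the vertices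
  outside N[P] form a union of components containing C. For v \<in> C the sequence P, v is Grundy,
  hence dominates every v' \<in> C, which forces v and v' to be adjacent.\<close>

definition induced_edges :: "('a \<Rightarrow> 'a \<Rightarrow> bool) \<Rightarrow> 'a set \<Rightarrow> ('a \<times> 'a) set" where
  "induced_edges E A = {(a, b). a \<in> A \<and> b \<in> A \<and> E a b}"

locale simple_graph =
  fixes V :: "'a set" and E :: "'a \<Rightarrow> 'a \<Rightarrow> bool"
  assumes graph: "graph V E"
begin

abbreviation N :: "'a \<Rightarrow> 'a set" where
  "N \<equiv> closed_nbhd V E"

abbreviation \<gamma> :: nat where
  "\<gamma> \<equiv> grundy_dom_number V E"

lemma finite_vertices: "finite V"
  and adj_in_vertices: "E u v \<Longrightarrow> u \<in> V \<and> v \<in> V"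
  and adj_sym: "E u v \<Longrightarrow> E v u"
  and adj_irrefl: "\<not> E v v"
  using graph unfolding graph_def by auto

lemma mem_closed_nbhd [simp]: "w \<in> N v \<longleftrightarrow> w = v \<or> E v w"
  unfolding closed_nbhd_def open_nbhd_def using adj_in_vertices by auto

lemma reachable_sym: "E\<^sup>*\<^sup>* u v \<Longrightarrow> E\<^sup>*\<^sup>* v u"
  using symp_rtranclp[of E] adj_sym by (metis sympD sympI)

lemma cn_seq_Nil [simp]: "cn_seq V E []"
  unfolding cn_seq_def by simp

lemma cn_seq_snoc:
  "cn_seq V E (xs @ [x]) \<longleftrightarrow> cn_seq V E xs \<and> x \<in> V \<and> \<not> N x \<subseteq> \<Union>(N ` set xs)"
proof -
  have prefix_union: "(\<Union>j<i. N ((xs @ [x]) ! j)) = (\<Union>j<i. N (xs ! j))" if "i \<le> length xs" for i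
    using that by (auto simp: nth_append)
  have "(\<Union>j<length xs. N (xs ! j)) = \<Union>(N ` set xs)"
    by (auto simp: set_conv_nth)
  moreover have "x \<notin> set xs" if "\<not> N x \<subseteq> \<Union>(N ` set xs)"
    using that by auto
  ultimately show ?thesis
    unfolding cn_seq_def using prefix_union
    by (auto simp: less_Suc_eq nth_append)
qed

lemma cn_seq_length_le: "cn_seq V E xs \<Longrightarrow> length xs \<le> card V"
  unfolding cn_seq_def using finite_vertices by (metis card_mono distinct_card)

lemma finite_cn_seqs: "finite {xs. cn_seq V E xs}"
proof (rule finite_subset)
  show "{xs. cn_seq V E xs} \<subseteq> {xs. set xs \<subseteq> V \<and> length xs \<le> card V}"
    using cn_seq_length_le unfolding cn_seq_def by auto
qed (rule finite_lists_length_le[OF finite_vertices])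

lemma cn_seq_length_le_grundy: "cn_seq V E xs \<Longrightarrow> length xs \<le> \<gamma>"
  unfolding grundy_dom_number_def by (rule Max_ge) (use finite_cn_seqs in auto)

lemma grundy_dom_number_attained: "\<exists>xs. cn_seq V E xs \<and> length xs = \<gamma>"
proof -
  have "\<gamma> \<in> length ` {xs. cn_seq V E xs}"
    unfolding grundy_dom_number_def by (rule Max_in) (use finite_cn_seqs cn_seq_Nil in blast)+
  then show ?thesis by auto
qed

lemma grundy_seq_dominates:
  assumes "cn_seq V E xs" "length xs = \<gamma>"
  shows "V \<subseteq> \<Union>(N ` set xs)"
proof
  fix w assume "w \<in> V"
  show "w \<in> \<Union>(N ` set xs)"
  proof (rule ccontr)
    assume "w \<notin> \<Union>(N ` set xs)"
    then have "cn_seq V E (xs @ [w])"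
      using assms(1) \<open>w \<in> V\<close> cn_seq_snoc by auto
    then show False
      using cn_seq_length_le_grundy assms(2) by fastforce
  qed
qed

lemma cn_seq_inj_on_closed_nbhd: "cn_seq V E xs \<Longrightarrow> inj_on N (set xs)"
proof (induction xs rule: rev_induct)
  case (snoc x xs)
  then have "cn_seq V E xs" "N x \<notin> N ` set xs"
    using cn_seq_snoc by auto
  with snoc.IH show ?case by auto
qed simp

lemma cn_seq_filter: "cn_seq V E xs \<Longrightarrow> cn_seq V E (filter P xs)"
proof (induction xs rule: rev_induct)
  case (snoc x xs)
  then have "cn_seq V E xs" "x \<in> V" "\<not> N x \<subseteq> \<Union>(N ` set xs)"
    using cn_seq_snoc by auto
  moreover have "\<Union>(N ` set (filter P xs)) \<subseteq> \<Union>(N ` set xs)"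
    by auto
  ultimately show ?case
    using snoc.IH cn_seq_snoc by auto
qed simp

lemma cn_seq_append:
  assumes "cn_seq V E xs" "cn_seq V E ys"
    and "\<And>x y. x \<in> set xs \<Longrightarrow> y \<in> set ys \<Longrightarrow> N x \<inter> N y = {}"
  shows "cn_seq V E (xs @ ys)"
  using assms(2,3)
proof (induction ys rule: rev_induct)
  case (snoc y ys)
  then have "cn_seq V E ys" "y \<in> V" "\<not> N y \<subseteq> \<Union>(N ` set ys)"
    using cn_seq_snoc by auto
  moreover have "N y \<inter> \<Union>(N ` set xs) = {}"
    using snoc.prems(2) by auto
  ultimately show ?case
    using snoc.IH snoc.prems(2) cn_seq_snoc[of "xs @ ys" y] by auto
qed (use assms(1) in simp)

lemma cn_seq_reorder:
  assumes "cn_seq V E xs" and closed: "\<And>v w. E v w \<Longrightarrow> v \<in> C \<longleftrightarrow> w \<in> C"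
  shows "cn_seq V E (filter (\<lambda>v. v \<notin> C) xs @ filter (\<lambda>v. v \<in> C) xs)"
proof (rule cn_seq_append)
  fix x y assume "x \<in> set (filter (\<lambda>v. v \<notin> C) xs)" "y \<in> set (filter (\<lambda>v. v \<in> C) xs)"
  then show "N x \<inter> N y = {}"
    using closed by auto
qed (use assms(1) cn_seq_filter in auto)

lemma ex_grundy_prefix_with_private_vertex:
  assumes "u \<in> V"
  obtains P y where "cn_seq V E P" "Suc (length P) = \<gamma>"
    "y \<in> V" "y \<notin> \<Union>(N ` set P)" "E\<^sup>*\<^sup>* u y"
proof -
  define C where "C = {v \<in> V. E\<^sup>*\<^sup>* u v}"
  have step: "w \<in> C" if "v \<in> C" "E v w" for v w
    using that adj_in_vertices unfolding C_def by (auto intro: rtranclp.rtrancl_into_rtrancl)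
  have closed: "v \<in> C \<longleftrightarrow> w \<in> C" if "E v w" for v w
    using step that adj_sym by blast
  obtain S where S: "cn_seq V E S" "length S = \<gamma>"
    using grundy_dom_number_attained by blast
  then obtain s where s: "s \<in> set S" "u \<in> N s"
    using grundy_seq_dominates assms by blast
  have "s \<in> C"
    using s(2) assms closed unfolding C_def by auto
  define xs where "xs = filter (\<lambda>v. v \<notin> C) S"
  define ys where "ys = filter (\<lambda>v. v \<in> C) S"
  have "ys \<noteq> []"
    using s(1) \<open>s \<in> C\<close> unfolding ys_def by (metis filter_empty_conv)
  then obtain ys' z where ys: "ys = ys' @ [z]"
    using rev_exhaust by blast
  define P where "P = xs @ ys'"
  have "cn_seq V E (P @ [z])"
    using cn_seq_reorder[OF S(1) closed] unfolding P_def xs_def ys_def[symmetric] ys by simp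
  then obtain y where "cn_seq V E P" "y \<in> N z" "y \<notin> \<Union>(N ` set P)"
    using cn_seq_snoc by blast
  moreover have "Suc (length P) = \<gamma>"
    using sum_length_filter_compl[of "\<lambda>v. v \<in> C" S] S(2)
    unfolding P_def xs_def ys_def[symmetric] ys by simp
  moreover have "z \<in> set ys"
    using ys by simp
  then have "z \<in> C"
    unfolding ys_def by simp
  then have "y \<in> C"
    using \<open>y \<in> N z\<close> closed by auto
  ultimately show ?thesis
    using that unfolding C_def by blast
qed

lemma grundy_seq_snoc:
  assumes "cn_seq V E P" "Suc (length P) = \<gamma>" "w \<in> V" "\<not> N w \<subseteq> \<Union>(N ` set P)"
  shows "cn_seq V E (P @ [w])" "length (P @ [w]) = \<gamma>"
  using assms cn_seq_snoc by auto

lemma card_induced_edges_automorphism: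
  assumes "automorphism V E \<phi>" "A \<subseteq> V"
  shows "card (induced_edges E (\<phi> ` A)) = card (induced_edges E A)"
proof -
  have inj: "inj_on \<phi> V" and adj: "\<forall>u\<in>V. \<forall>v\<in>V. E u v \<longleftrightarrow> E (\<phi> u) (\<phi> v)"
    using assms(1) bij_betw_imp_inj_on unfolding automorphism_def by blast+
  have "induced_edges E (\<phi> ` A) = map_prod \<phi> \<phi> ` induced_edges E A"
    using adj assms(2) unfolding induced_edges_def by (auto simp: image_iff)
  moreover have "inj_on (map_prod \<phi> \<phi>) (induced_edges E A)"
    using inj assms(2) unfolding induced_edges_def inj_on_def by auto
  ultimately show ?thesis
    by (simp add: card_image)
qed

text \<open>Both P + y and P + w are Grundy dominating sets, but y has no neighbour in P while w
  has one, so P + w spans more edges than P + y and no automorphism maps one onto the other.\<close>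
lemma undominated_closed_under_adj:
  assumes iso: "iso_unique_grundy V E"
    and P: "cn_seq V E P" "Suc (length P) = \<gamma>"
    and y: "y \<in> V" "y \<notin> \<Union>(N ` set P)"
    and v: "v \<notin> \<Union>(N ` set P)" "E v w"
  shows "w \<notin> \<Union>(N ` set P)"
proof
  assume "w \<in> \<Union>(N ` set P)"
  then obtain a where a: "a \<in> set P" "w \<in> N a"
    by blast
  have "v \<in> N w"
    using v(2) adj_sym by simp
  then have w: "w \<in> V" "\<not> N w \<subseteq> \<Union>(N ` set P)"
    using v adj_in_vertices by blast+
  then have "w \<notin> set P" "E a w"
    using a by auto
  have "\<not> N y \<subseteq> \<Union>(N ` set P)"
    using y(2) by auto
  have grundy: "grundy_dominating_set V E (insert x (set P))"
    if "x \<in> V" "\<not> N x \<subseteq> \<Union>(N ` set P)" for x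
    using grundy_seq_snoc[OF P that] unfolding grundy_dominating_set_def
    by (intro exI[of _ "P @ [x]"]) auto
  obtain \<phi> where "automorphism V E \<phi>" "\<phi> ` insert y (set P) = insert w (set P)"
    using iso grundy[OF y(1) \<open>\<not> N y \<subseteq> _\<close>] grundy[OF w] unfolding iso_unique_grundy_def by blast
  moreover have "set P \<subseteq> V"
    using P(1) unfolding cn_seq_def by blast
  ultimately have "card (induced_edges E (insert w (set P))) = card (induced_edges E (insert y (set P)))"
    using card_induced_edges_automorphism y(1) by (metis insert_subset)
  also have "induced_edges E (insert y (set P)) = induced_edges E (set P)"
    using y(2) adj_irrefl adj_sym unfolding induced_edges_def by auto
  also have "card (induced_edges E (set P)) < card (induced_edges E (insert w (set P)))"
  proof (rule psubset_card_mono)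
    show "finite (induced_edges E (insert w (set P)))"
      using finite_vertices \<open>set P \<subseteq> V\<close> w(1) unfolding induced_edges_def
      by (auto intro: finite_subset[of _ "V \<times> V"])
    show "induced_edges E (set P) \<subset> induced_edges E (insert w (set P))"
      using a(1) \<open>w \<notin> set P\<close> \<open>E a w\<close> unfolding induced_edges_def by auto
  qed
  finally show False
    by simp
qed

lemma iso_unique_grundy_component_complete:
  assumes iso: "iso_unique_grundy V E" and "u \<in> V"
  shows "is_complete E {v \<in> V. E\<^sup>*\<^sup>* u v}"
proof -
  obtain P y where P: "cn_seq V E P" "Suc (length P) = \<gamma>"
    and y: "y \<in> V" "y \<notin> \<Union>(N ` set P)" "E\<^sup>*\<^sup>* u y"
    using ex_grundy_prefix_with_private_vertex \<open>u \<in> V\<close> by blast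
  have undominated: "v \<notin> \<Union>(N ` set P)" if "E\<^sup>*\<^sup>* y v" for v
    using that
  proof (induction rule: rtranclp_induct)
    case (step v w)
    then show ?case
      using undominated_closed_under_adj[OF iso P y(1,2)] by blast
  qed (use y in simp)
  show ?thesis
    unfolding is_complete_def
  proof (intro ballI impI)
    fix v v' assume "v \<in> {v \<in> V. E\<^sup>*\<^sup>* u v}" "v' \<in> {v \<in> V. E\<^sup>*\<^sup>* u v}" "v \<noteq> v'"
    then have "v \<in> V" "v' \<in> V" "v \<notin> \<Union>(N ` set P)" "v' \<notin> \<Union>(N ` set P)"
      using undominated y(3) reachable_sym by (blast intro: rtranclp_trans)+
    then have "v' \<in> \<Union>(N ` set (P @ [v]))"
      using grundy_seq_dominates grundy_seq_snoc[OF P] by (metis mem_closed_nbhd subsetD UN_iff)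
    then show "E v v'"
      using \<open>v' \<notin> \<Union>(N ` set P)\<close> \<open>v \<noteq> v'\<close> by auto
  qed
qed

lemma automorphism_if_closed_nbhd_preserving:
  assumes bij: "bij_betw \<phi> V V" and nbhd: "\<And>x. x \<in> V \<Longrightarrow> N (\<phi> x) = N x"
  shows "automorphism V E \<phi>"
  unfolding automorphism_def
proof (intro conjI bij ballI)
  fix u v assume "u \<in> V" "v \<in> V"
  have "u \<noteq> v \<longleftrightarrow> \<phi> u \<noteq> \<phi> v"
    using bij \<open>u \<in> V\<close> \<open>v \<in> V\<close> by (metis bij_betw_imp_inj_on inj_on_contraD)
  moreover have "v \<in> N u \<longleftrightarrow> \<phi> v \<in> N (\<phi> u)"
  proof -
    have "v \<in> N u \<longleftrightarrow> u \<in> N v"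
      using adj_sym by auto
    also have "\<dots> \<longleftrightarrow> u \<in> N (\<phi> v)"
      using nbhd \<open>v \<in> V\<close> by simp
    also have "\<dots> \<longleftrightarrow> \<phi> v \<in> N (\<phi> u)"
      using adj_sym nbhd \<open>u \<in> V\<close> by auto
    finally show ?thesis .
  qed
  ultimately show "E u v \<longleftrightarrow> E (\<phi> u) (\<phi> v)"
    using adj_irrefl by auto
qed

text \<open>Swap each vertex of A with the vertex of B sharing its closed neighborhood.\<close>
lemma closed_nbhd_transversals_automorphic:
  assumes "A \<subseteq> V" "B \<subseteq> V" "inj_on N A" "inj_on N B" "N ` A = N ` B"
  shows "\<exists>\<phi>. automorphism V E \<phi> \<and> \<phi> ` A = B"
proof -
  define toB where "toB x = the_inv_into B N (N x)" for x
  define toA where "toA x = the_inv_into A N (N x)" for x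
  have toB: "toB x \<in> B" "N (toB x) = N x" if "x \<in> A" for x
  proof -
    have "N x \<in> N ` B"
      using that assms(5) by blast
    then show "toB x \<in> B" "N (toB x) = N x"
      unfolding toB_def using assms(4) by (simp_all add: the_inv_into_into f_the_inv_into_f)
  qed
  have toA: "toA x \<in> A" "N (toA x) = N x" if "x \<in> B" for x
  proof -
    have "N x \<in> N ` A"
      using that assms(5) by blast
    then show "toA x \<in> A" "N (toA x) = N x"
      unfolding toA_def using assms(3) by (simp_all add: the_inv_into_into f_the_inv_into_f)
  qed
  have toB_eq: "toB x = b" if "b \<in> B" "N b = N x" for x b
    using that assms(4) unfolding toB_def by (simp add: the_inv_into_f_eq)
  have toA_eq: "toA x = a" if "a \<in> A" "N a = N x" for x a
    using that assms(3) unfolding toA_def by (simp add: the_inv_into_f_eq)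
  define \<phi> where "\<phi> x = (if x \<in> A then toB x else if x \<in> B then toA x else x)" for x
  have \<phi>_nbhd: "N (\<phi> x) = N x" for x
    unfolding \<phi>_def using toA toB by auto
  have \<phi>_vertex: "\<phi> x \<in> V" if "x \<in> V" for x
    unfolding \<phi>_def using toA toB assms(1,2) that by auto
  have \<phi>_involution: "\<phi> (\<phi> x) = x" for x
  proof (cases "x \<in> A")
    case True
    then show ?thesis
      using toB[OF True] toA_eq[of x] toB_eq[of "toB x" "toB x"] assms(3)
      unfolding \<phi>_def by (auto dest: inj_onD)
  next
    case False
    show ?thesis
    proof (cases "x \<in> B")
      case True
      then have "\<phi> x = toA x" "toA x \<in> A" "toB (toA x) = x"
        using False toA toB_eq[of x "toA x"] unfolding \<phi>_def by auto
      then show ?thesis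
        unfolding \<phi>_def by simp
    qed (use False in \<open>simp add: \<phi>_def\<close>)
  qed
  have "bij_betw \<phi> V V"
    by (rule bij_betw_byWitness[where f' = \<phi>]) (use \<phi>_involution \<phi>_vertex in auto)
  then have "automorphism V E \<phi>"
    using automorphism_if_closed_nbhd_preserving \<phi>_nbhd by blast
  moreover have "\<phi> ` A = B"
  proof
    show "\<phi> ` A \<subseteq> B"
      unfolding \<phi>_def using toB by auto
    show "B \<subseteq> \<phi> ` A"
    proof
      fix b assume "b \<in> B"
      then have "\<phi> (toA b) = b"
        unfolding \<phi>_def using toA toB_eq by auto
      then show "b \<in> \<phi> ` A"
        using toA(1)[OF \<open>b \<in> B\<close>] by (metis image_eqI)
    qed
  qed
  ultimately show ?thesis
    by blast
qed

lemma closed_nbhd_eq_component: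
  assumes complete: "\<forall>C. connected_component V E C \<longrightarrow> is_complete E C" and "u \<in> V"
  shows "N u = {v \<in> V. E\<^sup>*\<^sup>* u v}"
proof -
  have "connected_component V E {v \<in> V. E\<^sup>*\<^sup>* u v}"
    using \<open>u \<in> V\<close> unfolding connected_component_def by blast
  then have "is_complete E {v \<in> V. E\<^sup>*\<^sup>* u v}"
    using complete by blast
  then have adj: "E u v" if "v \<in> V" "E\<^sup>*\<^sup>* u v" "u \<noteq> v" for v
    using that \<open>u \<in> V\<close> unfolding is_complete_def by blast
  show ?thesis
  proof (intro equalityI subsetI)
    fix v assume "v \<in> N u"
    then show "v \<in> {v \<in> V. E\<^sup>*\<^sup>* u v}"
      using \<open>u \<in> V\<close> adj_in_vertices by auto
  next
    fix v assume "v \<in> {v \<in> V. E\<^sup>*\<^sup>* u v}"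
    then show "v \<in> N u"
      using adj by auto
  qed
qed

lemma grundy_dominating_set_transversal:
  assumes complete: "\<forall>C. connected_component V E C \<longrightarrow> is_complete E C"
    and "grundy_dominating_set V E A"
  shows "A \<subseteq> V" "inj_on N A" "N ` A = N ` V"
proof -
  obtain xs where xs: "cn_seq V E xs" "length xs = \<gamma>" "set xs = A"
    using assms(2) unfolding grundy_dominating_set_def by blast
  then show "A \<subseteq> V" "inj_on N A"
    using cn_seq_inj_on_closed_nbhd unfolding cn_seq_def by auto
  have "N x \<in> N ` A" if "x \<in> V" for x
  proof -
    obtain a where "a \<in> A" "x \<in> N a"
      using grundy_seq_dominates[OF xs(1,2)] xs(3) \<open>x \<in> V\<close> by blast
    then have "E\<^sup>*\<^sup>* a x" "E\<^sup>*\<^sup>* x a"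
      using reachable_sym by auto
    moreover have "a \<in> V"
      using \<open>a \<in> A\<close> \<open>A \<subseteq> V\<close> by blast
    ultimately have "N a = N x"
      using closed_nbhd_eq_component[OF complete] \<open>x \<in> V\<close>
      by (auto intro: rtranclp_trans)
    then show ?thesis
      using \<open>a \<in> A\<close> by blast
  qed
  then show "N ` A = N ` V"
    using \<open>A \<subseteq> V\<close> by blast
qed

lemma complete_components_iso_unique_grundy:
  assumes "\<forall>C. connected_component V E C \<longrightarrow> is_complete E C"
  shows "iso_unique_grundy V E"
  unfolding iso_unique_grundy_def
  using closed_nbhd_transversals_automorphic grundy_dominating_set_transversal[OF assms] by metis

end

theorem theorem4p4:
  fixes V :: "'a set" and E :: "'a \<Rightarrow> 'a \<Rightarrow> bool"
  assumes "graph V E"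
  shows "iso_unique_grundy V E \<longleftrightarrow>
           (\<forall>C. connected_component V E C \<longrightarrow> is_complete E C)"
proof -
  interpret simple_graph V E
    using assms by unfold_locales
  show ?thesis
    using iso_unique_grundy_component_complete complete_components_iso_unique_grundy
    unfolding connected_component_def by blast
qed

end
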